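(* If a partial isometry $W\in\mathbf{M}_{2N}(\mathbb{C})$ is self-dual ($W^\sharp=W$), then the initial space $(\ker W)^\perp$ of $W$ has even dimension and $\mathcal{T}$ maps the initial space isometrically onto the final space $(\ker W^* )^\perp$ of $W$.
   Context: A partial isometry is $W$ with $WW^*W=W$. For $X\in\mathbf{M}_{2N}(\mathbb{C})$ in $N\times N$ blocks $X=\begin{bmatrix}A&B\\C&D\end{bmatrix}$, $X^{\sharp}=\begin{bmatrix}D^{\mathrm T}&-B^{\mathrm T}\\-C^{\mathrm T}&A^{\mathrm T}\end{bmatrix}$. $\mathcal{T}:\mathbb{C}^{2N}\to\mathbb{C}^{2N}$ is the conjugate-linear map $\mathcal{T}\begin{bmatrix}\mathbf v\\ \mathbf w\end{bmatrix}=\begin{bmatrix}-\overline{\mathbf w}\\ \overline{\mathbf v}\end{bmatrix}$ for $\mathbf v,\mathbf w\in\mathbb{C}^N$. *)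

theory Defs
  imports "HOL-Analysis.Analysis"
begin

text \<open>Complex 2N x 2N matrices are indexed by the type 'n + 'n (N = CARD('n)):
  Inl i is the i-th index of the first block, Inr i of the second.\<close>

definition cadjoint :: "complex^'m::finite^'k::finite \<Rightarrow> complex^'k^'m" where
  "cadjoint X = (\<chi> i j. cnj (X $ j $ i))"

definition partial_isometry :: "complex^'n::finite^'n \<Rightarrow> bool" where
  "partial_isometry W \<longleftrightarrow> W ** cadjoint W ** W = W"

text \<open>X sharp = [[D^T, -B^T], [-C^T, A^T]] for X = [[A, B], [C, D]].\<close>
definition sharp :: "complex^('n::finite+'n)^('n+'n) \<Rightarrow> complex^('n+'n)^('n+'n)" where
  "sharp X = (\<chi> r c. case (r, c) of
      (Inl i, Inl j) \<Rightarrow> X $ Inr j $ Inr i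
    | (Inl i, Inr j) \<Rightarrow> - (X $ Inl j $ Inr i)
    | (Inr i, Inl j) \<Rightarrow> - (X $ Inr j $ Inl i)
    | (Inr i, Inr j) \<Rightarrow> X $ Inl j $ Inl i)"

definition Tmap :: "complex^('n::finite+'n) \<Rightarrow> complex^('n+'n)" where
  "Tmap x = (\<chi> r. case r of
      Inl i \<Rightarrow> - cnj (x $ Inr i)
    | Inr i \<Rightarrow> cnj (x $ Inl i))"

definition cinner :: "complex^'n::finite \<Rightarrow> complex^'n \<Rightarrow> complex" where
  "cinner v w = (\<Sum>i\<in>UNIV. v $ i * cnj (w $ i))"

definition orth_compl :: "(complex^'n::finite) set \<Rightarrow> (complex^'n) set" where
  "orth_compl S = {v. \<forall>w\<in>S. cinner v w = 0}"

definition mker :: "complex^'m::finite^'k::finite \<Rightarrow> (complex^'m) set" where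
  "mker X = {v. X *v v = 0}"

end

theory Submission
  imports Defs
begin

text \<open>Since W is self-dual, conjugating by the antiunitary T exchanges W and its adjoint:
  T W = W* T. As W* W and W W* fix exactly the initial and the final space of the
  partial isometry W, T maps the one onto the other, isometrically because T is antiunitary.
  Moreover S = T W is an antiunitary map of the initial space onto itself with S^2 = -1, a
  quaternionic structure; any such space splits off the orthogonal pair v, S v and the
  dimension drops by two, so it is even.\<close>

lemma sum_UNIV_Plus:
  "(\<Sum>r\<in>(UNIV::('a::finite + 'a) set). f r) = (\<Sum>i\<in>UNIV. f (Inl i)) + (\<Sum>i\<in>UNIV. f (Inr i))"
  by (subst UNIV_Plus_UNIV[symmetric], subst sum.Plus) (auto simp: o_def)

lemma cinner_add_left: "cinner (x + y) z = cinner x z + cinner y z"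
  by (simp add: cinner_def distrib_right sum.distrib)

lemma cinner_diff_left: "cinner (x - y) z = cinner x z - cinner y z"
  by (simp add: cinner_def left_diff_distrib sum_subtractf)

lemma cinner_scale_left: "cinner (c *s x) z = c * cinner x z"
  by (simp add: cinner_def sum_distrib_left mult.assoc)

lemma cinner_minus_right: "cinner x (- y) = - cinner x y"
  by (simp add: cinner_def sum_negf)

lemma cinner_zero_left [simp]: "cinner 0 x = 0"
  by (simp add: cinner_def)

lemma cinner_zero_right [simp]: "cinner x 0 = 0"
  by (simp add: cinner_def)

lemma cinner_commute: "cinner x y = cnj (cinner y x)"
  by (simp add: cinner_def mult.commute)

lemma cinner_self: "cinner x x = complex_of_real ((norm x)\<^sup>2)"
proof -
  have "(norm x)\<^sup>2 = (\<Sum>i\<in>UNIV. (norm (x $ i))\<^sup>2)"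
    by (simp add: norm_vec_def L2_set_def sum_nonneg)
  moreover have "cinner x x = (\<Sum>i\<in>UNIV. complex_of_real ((norm (x $ i))\<^sup>2))"
    unfolding cinner_def by (rule sum.cong[OF refl]) (rule complex_norm_square[symmetric])
  ultimately show ?thesis
    by (simp add: of_real_sum)
qed

lemma cinner_self_eq_0 [simp]: "cinner x x = 0 \<longleftrightarrow> x = 0"
  by (simp add: cinner_self)

lemma cinner_matrix_vector_mult_left: "cinner (X *v a) b = cinner a (cadjoint X *v b)"
proof -
  have "cinner (X *v a) b = (\<Sum>i\<in>UNIV. \<Sum>j\<in>UNIV. X $ i $ j * a $ j * cnj (b $ i))"
    by (simp add: cinner_def matrix_vector_mult_def sum_distrib_right)
  also have "\<dots> = (\<Sum>j\<in>UNIV. \<Sum>i\<in>UNIV. X $ i $ j * a $ j * cnj (b $ i))"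
    by (rule sum.swap)
  also have "\<dots> = cinner a (cadjoint X *v b)"
    by (simp add: cinner_def matrix_vector_mult_def cadjoint_def sum_distrib_left mult_ac)
  finally show ?thesis .
qed

lemma cadjoint_cadjoint [simp]: "cadjoint (cadjoint X) = X"
  by (simp add: cadjoint_def vec_eq_iff)

lemma cinner_cadjoint_mult_left: "cinner (cadjoint X *v a) b = cinner a (X *v b)"
  using cinner_matrix_vector_mult_left[of "cadjoint X"] by simp

lemma cadjoint_matrix_mult: "cadjoint (A ** B) = cadjoint B ** cadjoint A"
  unfolding cadjoint_def matrix_matrix_mult_def vec_eq_iff
  by (simp add: mult.commute)

lemma subspace_orth_compl: "vec.subspace (orth_compl A)"
  unfolding vec.subspace_def orth_compl_def
  by (auto simp: cinner_add_left cinner_scale_left)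

lemma partial_isometry_cadjoint:
  assumes "partial_isometry W"
  shows "partial_isometry (cadjoint W)"
proof -
  have "cadjoint (W ** cadjoint W ** W) = cadjoint W"
    using assms by (simp add: partial_isometry_def)
  then show ?thesis
    by (simp add: partial_isometry_def cadjoint_matrix_mult matrix_mul_assoc)
qed

lemma partial_isometry_mult_cadjoint_mult:
  assumes "partial_isometry W"
  shows "W *v (cadjoint W *v (W *v x)) = W *v x"
  using assms by (metis partial_isometry_def matrix_vector_mul_assoc)

lemma partial_isometry_orth_compl_mker:
  assumes "partial_isometry W"
  shows "orth_compl (mker W) = {x. cadjoint W *v (W *v x) = x}"
proof (intro set_eqI iffI)
  fix x assume x: "x \<in> orth_compl (mker W)"
  define d where "d = x - cadjoint W *v (W *v x)"
  have "W *v d = 0"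
    using partial_isometry_mult_cadjoint_mult[OF assms, of x]
    by (simp add: d_def matrix_vector_mult_diff_distrib)
  then have "cinner x d = 0" and "cinner (cadjoint W *v (W *v x)) d = 0"
    using x by (simp_all add: orth_compl_def mker_def cinner_cadjoint_mult_left)
  then have "cinner d d = 0"
    by (simp add: d_def cinner_diff_left[of x])
  then show "x \<in> {x. cadjoint W *v (W *v x) = x}"
    by (simp add: d_def)
next
  fix x assume "x \<in> {x. cadjoint W *v (W *v x) = x}"
  then have "cinner x w = 0" if "W *v w = 0" for w
    using that cinner_cadjoint_mult_left[of W "W *v x" w] by simp
  then show "x \<in> orth_compl (mker W)"
    by (simp add: orth_compl_def mker_def)
qed

lemma Tmap_Tmap [simp]: "Tmap (Tmap x) = - x"
  by (simp add: Tmap_def vec_eq_iff split: sum.splits)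

lemma Tmap_minus: "Tmap (- x) = - Tmap x"
  by (simp add: Tmap_def vec_eq_iff split: sum.splits)

lemma cinner_Tmap: "cinner (Tmap a) (Tmap b) = cnj (cinner a b)"
  by (simp add: cinner_def Tmap_def sum_UNIV_Plus mult.commute add.commute)

lemma norm_Tmap: "norm (Tmap v) = norm v"
proof -
  have "complex_of_real ((norm (Tmap v))\<^sup>2) = complex_of_real ((norm v)\<^sup>2)"
    using cinner_Tmap[of v v] by (simp add: cinner_self)
  then have "(norm (Tmap v))\<^sup>2 = (norm v)\<^sup>2"
    using of_real_eq_iff by blast
  then show ?thesis
    by (simp add: power2_eq_iff_nonneg)
qed

lemma sharp_cadjoint: "sharp (cadjoint X) = cadjoint (sharp X)"
  by (simp add: sharp_def cadjoint_def vec_eq_iff split: sum.splits)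

lemma Tmap_matrix_vector_mult: "Tmap (X *v x) = cadjoint (sharp X) *v Tmap x"
  by (simp add: vec_eq_iff Tmap_def sharp_def cadjoint_def matrix_vector_mult_def
      sum_UNIV_Plus sum_negf split: sum.splits)

lemma Tmap_cadjoint_mult: "Tmap (cadjoint X *v x) = sharp X *v Tmap x"
  by (simp add: Tmap_matrix_vector_mult sharp_cadjoint)

lemma dim_split_orthogonal_pair:
  assumes U: "vec.subspace U" and "v \<in> U" "w \<in> U" "v \<noteq> 0" "w \<noteq> 0"
    and vw: "cinner v w = 0"
  shows "vec.dim U = vec.dim (U \<inter> orth_compl {v, w}) + 2"
proof -
  define U' where "U' = U \<inter> orth_compl {v, w}"
  have wv: "cinner w v = 0"
    using vw by (simp add: cinner_commute[of w])
  have U': "vec.subspace U'"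
    unfolding U'_def by (intro vec.subspace_inter U subspace_orth_compl)
  obtain B where B: "B \<subseteq> U'" "vec.independent B" "U' \<subseteq> vec.span B" "card B = vec.dim U'"
    by (rule vec.basis_exists)
  have span_B: "vec.span B \<subseteq> U'"
    by (rule vec.span_minimal[OF B(1) U'])
  have w_notin: "w \<notin> vec.span B"
    using span_B \<open>w \<noteq> 0\<close> by (auto simp: U'_def orth_compl_def)
  have v_notin: "v \<notin> vec.span (insert w B)"
  proof
    assume "v \<in> vec.span (insert w B)"
    then obtain k where "v - k *s w \<in> U'"
      using span_B by (auto simp: vec.span_insert)
    then have "cinner (v - k *s w) v = 0"
      by (simp add: U'_def orth_compl_def)
    then show False
      using \<open>v \<noteq> 0\<close> wv by (simp add: cinner_diff_left cinner_scale_left)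
  qed
  let ?B = "insert v (insert w B)"
  have "vec.independent ?B"
    using v_notin w_notin B(2) by (intro vec.independent_insertI) auto
  moreover have "?B \<subseteq> U"
    using \<open>v \<in> U\<close> \<open>w \<in> U\<close> B(1) by (auto simp: U'_def)
  moreover have "U \<subseteq> vec.span ?B"
  proof
    fix x assume "x \<in> U"
    define a where "a = cinner x v / cinner v v"
    define b where "b = cinner x w / cinner w w"
    define u where "u = x - a *s v - b *s w"
    have "u \<in> U"
      unfolding u_def using U \<open>x \<in> U\<close> \<open>v \<in> U\<close> \<open>w \<in> U\<close>
      by (intro vec.subspace_diff vec.subspace_scale) auto
    moreover have "cinner u v = 0" "cinner u w = 0"
      using \<open>v \<noteq> 0\<close> \<open>w \<noteq> 0\<close> vw wv
      by (simp_all add: u_def a_def b_def cinner_diff_left cinner_scale_left)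
    ultimately have "u \<in> vec.span ?B"
      using B(3) vec.span_mono[of B ?B] by (auto simp: U'_def orth_compl_def)
    moreover have "a *s v \<in> vec.span ?B" "b *s w \<in> vec.span ?B"
      by (auto intro: vec.span_scale vec.span_base)
    ultimately have "u + a *s v + b *s w \<in> vec.span ?B"
      by (intro vec.span_add)
    then show "x \<in> vec.span ?B"
      by (simp add: u_def)
  qed
  ultimately have "card ?B = vec.dim U"
    by (rule vec.basis_card_eq_dim[rotated 2])
  moreover have "card ?B = card B + 2"
  proof -
    have "v \<notin> insert w B" "w \<notin> B"
      using v_notin w_notin vec.span_base by blast+
    then show ?thesis
      using vec.finiteI_independent[OF B(2)] by simp
  qed
  ultimately show ?thesis
    using B(4) by (simp add: U'_def)
qed

text \<open>The key point is that S v is orthogonal to v, since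
  <S v, v> = <S v, -S (S v)> = -cnj <v, S v> = -<S v, v>.\<close>

lemma even_dim_antiunitary_square_minus:
  fixes S :: "complex^'n::finite \<Rightarrow> complex^'n"
  assumes "vec.subspace U"
    and "\<And>x. x \<in> U \<Longrightarrow> S x \<in> U"
    and "\<And>x. x \<in> U \<Longrightarrow> S (S x) = - x"
    and "\<And>x y. x \<in> U \<Longrightarrow> y \<in> U \<Longrightarrow> cinner (S x) (S y) = cnj (cinner x y)"
  shows "even (vec.dim U)"
  using assms
proof (induction "vec.dim U" arbitrary: U rule: less_induct)
  case less
  note U = less.prems(1) and S_closed = less.prems(2)
    and S_S = less.prems(3) and S_cinner = less.prems(4)
  show ?case
  proof (cases "U \<subseteq> {0}")
    case True
    then have "vec.dim U = 0"
      by (simp only: vec.dim_eq_0)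
    then show ?thesis
      by (simp del: vec.dim_eq_0)
  next
    case False
    then obtain v where v: "v \<in> U" "v \<noteq> 0"
      by blast
    have "S v \<in> U"
      using S_closed v by simp
    have "S v \<noteq> 0"
      using S_cinner[OF v(1) v(1)] v by (metis cinner_self_eq_0 complex_cnj_zero_iff)
    have "cinner (S v) v = cinner (S v) (- S (S v))"
      using S_S v by simp
    also have "\<dots> = - cinner (S v) v"
      using S_cinner[OF v(1) \<open>S v \<in> U\<close>] by (simp add: cinner_minus_right cinner_commute[of v])
    finally have "cinner v (S v) = 0"
      by (simp add: cinner_commute[of v])
    define U' where "U' = U \<inter> orth_compl {v, S v}"
    have dim_U: "vec.dim U = vec.dim U' + 2"
      unfolding U'_def
      by (rule dim_split_orthogonal_pair) (use U v \<open>S v \<in> U\<close> \<open>S v \<noteq> 0\<close> \<open>cinner v (S v) = 0\<close> in auto)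
    have S_closed': "S x \<in> U'" if "x \<in> U'" for x
    proof -
      have x: "x \<in> U" "cinner x v = 0" "cinner x (S v) = 0"
        using that by (auto simp: U'_def orth_compl_def)
      have "cinner (S x) v = cinner (S x) (- S (S v))"
        using S_S v by simp
      then have "cinner (S x) v = 0"
        using S_cinner[OF x(1) \<open>S v \<in> U\<close>] x(3) by (simp add: cinner_minus_right)
      moreover have "cinner (S x) (S v) = 0"
        using S_cinner[OF x(1) v(1)] x(2) by simp
      ultimately show ?thesis
        using S_closed x(1) by (simp add: U'_def orth_compl_def)
    qed
    have "even (vec.dim U')"
    proof (rule less.hyps)
      show "vec.dim U' < vec.dim U"
        using dim_U by simp
      show "vec.subspace U'"
        unfolding U'_def by (intro vec.subspace_inter U subspace_orth_compl)
    qed (use S_closed' S_S S_cinner in \<open>auto simp: U'_def\<close>)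
    then show ?thesis
      using dim_U by simp
  qed
qed

context
  fixes W :: "complex^('n::finite + 'n)^('n + 'n)"
  assumes partial_isometry: "partial_isometry W"
    and self_dual: "sharp W = W"
begin

lemma initial_space_eq: "orth_compl (mker W) = {x. cadjoint W *v (W *v x) = x}"
  by (rule partial_isometry_orth_compl_mker[OF partial_isometry])

lemma final_space_eq: "orth_compl (mker (cadjoint W)) = {y. W *v (cadjoint W *v y) = y}"
  using partial_isometry_orth_compl_mker[OF partial_isometry_cadjoint[OF partial_isometry]]
  by simp

lemma Tmap_mult_eq_cadjoint_Tmap: "Tmap (W *v x) = cadjoint W *v Tmap x"
  using Tmap_matrix_vector_mult self_dual by metis

lemma Tmap_cadjoint_eq_mult_Tmap: "Tmap (cadjoint W *v x) = W *v Tmap x"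
  using Tmap_cadjoint_mult self_dual by metis

lemma Tmap_initial_space_subset: "Tmap ` orth_compl (mker W) \<subseteq> orth_compl (mker (cadjoint W))"
  using initial_space_eq final_space_eq by (auto simp flip: Tmap_mult_eq_cadjoint_Tmap Tmap_cadjoint_eq_mult_Tmap)

lemma Tmap_final_space_subset: "Tmap ` orth_compl (mker (cadjoint W)) \<subseteq> orth_compl (mker W)"
  using initial_space_eq final_space_eq by (auto simp flip: Tmap_mult_eq_cadjoint_Tmap Tmap_cadjoint_eq_mult_Tmap)

lemma Tmap_image_initial_space: "Tmap ` orth_compl (mker W) = orth_compl (mker (cadjoint W))"
proof
  show "orth_compl (mker (cadjoint W)) \<subseteq> Tmap ` orth_compl (mker W)"
  proof
    fix y assume "y \<in> orth_compl (mker (cadjoint W))"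
    then have "- Tmap y \<in> orth_compl (mker W)"
      using Tmap_final_space_subset vec.subspace_neg[OF subspace_orth_compl] by blast
    then show "y \<in> Tmap ` orth_compl (mker W)"
      by (metis Tmap_Tmap Tmap_minus minus_minus image_eqI)
  qed
qed (fact Tmap_initial_space_subset)

lemma even_dim_initial_space: "even (vec.dim (orth_compl (mker W)))"
proof (rule even_dim_antiunitary_square_minus[where S = "\<lambda>x. Tmap (W *v x)"])
  show "vec.subspace (orth_compl (mker W))"
    by (rule subspace_orth_compl)
  show "Tmap (W *v x) \<in> orth_compl (mker W)" for x
    using Tmap_final_space_subset partial_isometry_mult_cadjoint_mult[OF partial_isometry, of x]
      final_space_eq by auto
  show "Tmap (W *v Tmap (W *v x)) = - x" if "x \<in> orth_compl (mker W)" for x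
    using that initial_space_eq by (simp flip: Tmap_cadjoint_eq_mult_Tmap)
  show "cinner (Tmap (W *v x)) (Tmap (W *v y)) = cnj (cinner x y)"
    if "x \<in> orth_compl (mker W)" "y \<in> orth_compl (mker W)" for x y
    using that initial_space_eq by (simp add: cinner_Tmap cinner_matrix_vector_mult_left)
qed

end

theorem mainTheorem13:
  fixes W :: "complex^('n::finite + 'n)^('n + 'n)"
  assumes "partial_isometry W"
    and "sharp W = W"
  shows "even (vec.dim (orth_compl (mker W)))
    \<and> Tmap ` orth_compl (mker W) = orth_compl (mker (cadjoint W))
    \<and> (\<forall>v\<in>orth_compl (mker W). norm (Tmap v) = norm v)"
  using even_dim_initial_space[OF assms] Tmap_image_initial_space[OF assms] norm_Tmap
  by blast

end
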